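(* Let $\gamma\in(1,3)$ and $\mu\in(0,1)$. At the point $C=(U_C,H_C)=\big(\frac{2\mu}{\gamma+1},(\frac{\gamma-1}{\gamma+1})^2\mu^2\big)$, where $F=G=0$, the quadratic equation for the slope $s=\frac{dH}{dU}$ of integral curves of $\frac{dH}{dU}=\frac{F(H,U)}{G(H,U)}$, \[ G_H\,s^2+(G_U-F_H)\,s-F_U=0\quad\text{(coefficients evaluated at }C), \] i.e. $s=\frac{F_H-G_U\pm\sqrt{(G_U-F_H)^2+4F_UG_H}}{2G_H}$, has two distinct real roots; that is, there are two distinct branches of integral curves at $C$.
   Context: Set $k_1=\frac{(\gamma+1)+\mu(3-\gamma)}{2}$, $k_2=\frac{2(1-\mu)}{\gamma-1}$, $F(H,U)=2H[H-(U^2-k_1U+\mu)]$, $G(H,U)=H(U+k_2)-U(U-1)(U-\mu)$. The partial derivatives are $F_H=4H-2(U^2-k_1U+\mu)$, $F_U=-2H(2U-k_1)$, $G_H=U+k_2$, $G_U=H-3U^2+2(1+\mu)U-\mu$. *)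

theory Defs
  imports Complex_Main
begin

definition k1 :: "real \<Rightarrow> real \<Rightarrow> real" where
  "k1 \<gamma> \<mu> = ((\<gamma> + 1) + \<mu> * (3 - \<gamma>)) / 2"

definition k2 :: "real \<Rightarrow> real \<Rightarrow> real" where
  "k2 \<gamma> \<mu> = 2 * (1 - \<mu>) / (\<gamma> - 1)"

definition FF :: "real \<Rightarrow> real \<Rightarrow> real \<Rightarrow> real \<Rightarrow> real" where
  "FF \<gamma> \<mu> H U = 2 * H * (H - (U^2 - k1 \<gamma> \<mu> * U + \<mu>))"

definition GG :: "real \<Rightarrow> real \<Rightarrow> real \<Rightarrow> real \<Rightarrow> real" where
  "GG \<gamma> \<mu> H U = H * (U + k2 \<gamma> \<mu>) - U * (U - 1) * (U - \<mu>)"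

definition F_H :: "real \<Rightarrow> real \<Rightarrow> real \<Rightarrow> real \<Rightarrow> real" where
  "F_H \<gamma> \<mu> H U = 4 * H - 2 * (U^2 - k1 \<gamma> \<mu> * U + \<mu>)"

definition F_U :: "real \<Rightarrow> real \<Rightarrow> real \<Rightarrow> real \<Rightarrow> real" where
  "F_U \<gamma> \<mu> H U = - 2 * H * (2 * U - k1 \<gamma> \<mu>)"

definition G_H :: "real \<Rightarrow> real \<Rightarrow> real \<Rightarrow> real \<Rightarrow> real" where
  "G_H \<gamma> \<mu> H U = U + k2 \<gamma> \<mu>"

definition G_U :: "real \<Rightarrow> real \<Rightarrow> real \<Rightarrow> real \<Rightarrow> real" where
  "G_U \<gamma> \<mu> H U = H - 3 * U^2 + 2 * (1 + \<mu>) * U - \<mu>"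

end

theory Submission
  imports Defs "HOL-Library.Quadratic_Discriminant"
begin

text \<open>At \<open>C\<close> one has \<open>U\<^sup>2 - k\<^sub>1 U + \<mu> = H\<close>, so the second factor of \<open>F\<close> vanishes, and \<open>G = 0\<close> is a
  direct computation. In the slope equation the leading coefficient \<open>G\<^sub>H\<close> is positive and the
  constant term \<open>-F\<^sub>U = 2 H\<^sub>C (2 U\<^sub>C - k\<^sub>1)\<close> is negative, since \<open>H\<^sub>C > 0\<close> and \<open>2 U\<^sub>C < k\<^sub>1\<close>; outer
  coefficients of opposite signs force a positive discriminant.\<close>

lemma quadratic_two_roots_if_opposite_signs:
  fixes a b c :: real
  assumes "a * c < 0"
  shows "\<exists>x y. x \<noteq> y \<and> a * x\<^sup>2 + b * x + c = 0 \<and> a * y\<^sup>2 + b * y + c = 0"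
proof (rule discriminant_pos_ex)
  show "a \<noteq> 0" using assms by auto
  have "4 * a * c < 0" using assms by (simp add: mult.assoc)
  moreover have "0 \<le> b\<^sup>2" by simp
  ultimately show "discrim a b c > 0" unfolding discrim_def by linarith
qed

definition U_C :: "real \<Rightarrow> real \<Rightarrow> real" where
  "U_C \<gamma> \<mu> = 2 * \<mu> / (\<gamma> + 1)"

definition H_C :: "real \<Rightarrow> real \<Rightarrow> real" where
  "H_C \<gamma> \<mu> = ((\<gamma> - 1) / (\<gamma> + 1))\<^sup>2 * \<mu>\<^sup>2"

lemma H_C_eq_quadratic_at_U_C:
  assumes "\<gamma> \<noteq> -1"
  shows "(U_C \<gamma> \<mu>)\<^sup>2 - k1 \<gamma> \<mu> * U_C \<gamma> \<mu> + \<mu> = H_C \<gamma> \<mu>"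
proof -
  define a where "a = \<gamma> + 1"
  have "a \<noteq> 0" "\<gamma> = a - 1" using assms by (auto simp: a_def)
  then show ?thesis
    unfolding U_C_def H_C_def k1_def by (simp add: field_simps) algebra
qed

lemma FF_at_C: "\<gamma> \<noteq> -1 \<Longrightarrow> FF \<gamma> \<mu> (H_C \<gamma> \<mu>) (U_C \<gamma> \<mu>) = 0"
  by (simp add: FF_def H_C_eq_quadratic_at_U_C)

lemma GG_at_C:
  assumes "\<gamma> \<noteq> -1" "\<gamma> \<noteq> 1"
  shows "GG \<gamma> \<mu> (H_C \<gamma> \<mu>) (U_C \<gamma> \<mu>) = 0"
proof -
  define a where "a = \<gamma> + 1"
  have "a \<noteq> 0" "a - 2 \<noteq> 0" "\<gamma> = a - 1" using assms by (auto simp: a_def)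
  then show ?thesis
    unfolding GG_def H_C_def U_C_def k2_def by (simp add: field_simps) algebra
qed

lemma G_H_at_C_pos:
  assumes "1 < \<gamma>" "0 \<le> \<mu>" "\<mu> < 1"
  shows "G_H \<gamma> \<mu> (H_C \<gamma> \<mu>) (U_C \<gamma> \<mu>) > 0"
proof -
  have "0 \<le> 2 * \<mu> / (\<gamma> + 1)" "0 < 2 * (1 - \<mu>) / (\<gamma> - 1)" using assms by simp_all
  then show ?thesis by (simp add: G_H_def U_C_def k2_def)
qed

lemma two_U_C_less_k1:
  assumes "1 < \<gamma>" "\<mu> < 1"
  shows "2 * U_C \<gamma> \<mu> < k1 \<gamma> \<mu>"
proof -
  have "\<gamma> + 1 > 0" using assms by simp
  have "0 < (\<gamma> - 1)\<^sup>2 + 4" by (simp add: add_nonneg_pos)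
  then have \<mu>_bound: "\<mu> * ((\<gamma> - 1)\<^sup>2 + 4) < (\<gamma> - 1)\<^sup>2 + 4" using assms by simp
  have "2 * (\<gamma> + 1) * (k1 \<gamma> \<mu> - 2 * U_C \<gamma> \<mu>) = (\<gamma> + 1)\<^sup>2 - \<mu> * ((\<gamma> - 1)\<^sup>2 + 4)"
    using \<open>\<gamma> + 1 > 0\<close> unfolding k1_def U_C_def by (simp add: field_simps power2_eq_square)
  also have "\<dots> > (\<gamma> + 1)\<^sup>2 - ((\<gamma> - 1)\<^sup>2 + 4)"
    using \<mu>_bound by linarith
  also have "(\<gamma> + 1)\<^sup>2 - ((\<gamma> - 1)\<^sup>2 + 4) = 4 * (\<gamma> - 1)"
    by (simp add: power2_eq_square algebra_simps)
  finally have "0 < 2 * (\<gamma> + 1) * (k1 \<gamma> \<mu> - 2 * U_C \<gamma> \<mu>)" using assms by simp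
  then show ?thesis using \<open>\<gamma> + 1 > 0\<close> by (simp add: zero_less_mult_iff)
qed

lemma F_U_at_C_pos:
  assumes "1 < \<gamma>" "0 < \<mu>" "\<mu> < 1"
  shows "F_U \<gamma> \<mu> (H_C \<gamma> \<mu>) (U_C \<gamma> \<mu>) > 0"
proof -
  have "H_C \<gamma> \<mu> > 0" using assms by (simp add: H_C_def)
  moreover have "2 * U_C \<gamma> \<mu> - k1 \<gamma> \<mu> < 0" using two_U_C_less_k1 assms by simp
  ultimately show ?thesis by (simp add: F_U_def mult_pos_neg)
qed

theorem lemma3p3:
  fixes \<gamma> \<mu> :: real
  assumes "1 < \<gamma>" "\<gamma> < 3" "0 < \<mu>" "\<mu> < 1"
  defines "UC \<equiv> 2 * \<mu> / (\<gamma> + 1)"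
      and "HC \<equiv> ((\<gamma> - 1) / (\<gamma> + 1))^2 * \<mu>^2"
  shows "FF \<gamma> \<mu> HC UC = 0 \<and> GG \<gamma> \<mu> HC UC = 0 \<and> G_H \<gamma> \<mu> HC UC \<noteq> 0 \<and>
    (\<exists>s1 s2. s1 \<noteq> s2 \<and>
      G_H \<gamma> \<mu> HC UC * s1^2 + (G_U \<gamma> \<mu> HC UC - F_H \<gamma> \<mu> HC UC) * s1 - F_U \<gamma> \<mu> HC UC = 0 \<and>
      G_H \<gamma> \<mu> HC UC * s2^2 + (G_U \<gamma> \<mu> HC UC - F_H \<gamma> \<mu> HC UC) * s2 - F_U \<gamma> \<mu> HC UC = 0)"
proof -
  have C: "UC = U_C \<gamma> \<mu>" "HC = H_C \<gamma> \<mu>" by (simp_all add: UC_def HC_def U_C_def H_C_def)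
  have GH: "G_H \<gamma> \<mu> HC UC > 0" unfolding C using assms(1,3,4) by (simp add: G_H_at_C_pos)
  have FU: "F_U \<gamma> \<mu> HC UC > 0" unfolding C using assms(1,3,4) by (rule F_U_at_C_pos)
  have "G_H \<gamma> \<mu> HC UC * - F_U \<gamma> \<mu> HC UC < 0" using GH FU by (simp add: mult_pos_neg)
  from quadratic_two_roots_if_opposite_signs [OF this, of "G_U \<gamma> \<mu> HC UC - F_H \<gamma> \<mu> HC UC"]
  have "\<exists>s1 s2. s1 \<noteq> s2 \<and>
      G_H \<gamma> \<mu> HC UC * s1^2 + (G_U \<gamma> \<mu> HC UC - F_H \<gamma> \<mu> HC UC) * s1 - F_U \<gamma> \<mu> HC UC = 0 \<and>
      G_H \<gamma> \<mu> HC UC * s2^2 + (G_U \<gamma> \<mu> HC UC - F_H \<gamma> \<mu> HC UC) * s2 - F_U \<gamma> \<mu> HC UC = 0"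
    by simp
  moreover have "FF \<gamma> \<mu> HC UC = 0" "GG \<gamma> \<mu> HC UC = 0"
    unfolding C using assms(1) by (simp_all add: FF_at_C GG_at_C)
  ultimately show ?thesis using GH by simp
qed

end
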